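(* Let $M,N$ be complete pointed metric spaces and $f\colon M\to N$ a Lipschitz map with $f(0_M)=0_N$. If $\widehat f\colon\mathcal F(M)\to\mathcal F(N)$ is compact, then $$\lim_{d(x,y)\to+\infty}\frac{d(f(x),f(y))}{d(x,y)}=0,$$ i.e. for every $\varepsilon>0$ there is $R>0$ such that $d(f(x),f(y))\le\varepsilon d(x,y)$ whenever $d(x,y)\ge R$.
   Context: Scalars are $\mathbb K=\mathbb R$ or $\mathbb C$. For a pointed metric space $(M,d,0_M)$, $\mathrm{Lip}_0(M)$ denotes the Banach space of Lipschitz functions $g\colon M\to\mathbb K$ with $g(0_M)=0$ normed by the best Lipschitz constant; $\delta(x)\in\mathrm{Lip}_0(M)^*$ is evaluation at $x$; the Lipschitz-free space $\mathcal F(M)$ is the norm-closed linear span of $\{\delta(x):x\in M\}$ in $\mathrm{Lip}_0(M)^*$. For a Lipschitz map $f\colon M\to N$ with $f(0_M)=0_N$, $\widehat f\colon\mathcal F(M)\to\mathcal F(N)$ is the unique bounded linear operator with $\widehat f(\delta(x))=\delta(f(x))$ for all $x\in M$. *)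

theory Defs
  imports "HOL-Analysis.Analysis"
begin

definition lip0 :: "'a::metric_space \<Rightarrow> ('a \<Rightarrow> 'k::real_normed_field) set" where
  "lip0 z0 = {g. g z0 = 0 \<and> (\<exists>L. L-lipschitz_on UNIV g)}"

definition lipconst :: "('a::metric_space \<Rightarrow> 'k::real_normed_field) \<Rightarrow> real" where
  "lipconst g = Inf {L. L-lipschitz_on UNIV g}"

text \<open>Elements of Lip_0(M)^* are represented by functions on ('a => 'k); only their
  values on lip0 z0 matter. Dual norm:\<close>
definition dnorm :: "'a::metric_space \<Rightarrow> (('a \<Rightarrow> 'k::real_normed_field) \<Rightarrow> 'k) \<Rightarrow> real" where
  "dnorm z0 \<phi> = Sup {norm (\<phi> g) | g. g \<in> lip0 z0 \<and> lipconst g \<le> 1}"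

definition delta :: "'a \<Rightarrow> (('a \<Rightarrow> 'k) \<Rightarrow> 'k)" where
  "delta x = (\<lambda>g. g x)"

definition free :: "'a::metric_space \<Rightarrow> ((('a \<Rightarrow> 'k::real_normed_field) \<Rightarrow> 'k)) set" where
  "free z0 = {\<phi>.
     (\<forall>g\<in>lip0 z0. \<forall>h\<in>lip0 z0. \<phi> (\<lambda>x. g x + h x) = \<phi> g + \<phi> h) \<and>
     (\<forall>g\<in>lip0 z0. \<forall>c. \<phi> (\<lambda>x. c * g x) = c * \<phi> g) \<and>
     (\<exists>B. \<forall>g\<in>lip0 z0. norm (\<phi> g) \<le> B * lipconst g) \<and>
     (\<forall>\<epsilon>>0. \<exists>S c. finite S \<and>
        dnorm z0 (\<lambda>g. \<phi> g - (\<Sum>x\<in>S. c x * delta x g)) \<le> \<epsilon>)}"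

text \<open>The linearisation f-hat: f-hat(mu)(g) = mu(g o f), i.e. the restriction of the adjoint of
  the composition operator; it satisfies f-hat(delta x) = delta (f x).\<close>
definition fhat :: "('a \<Rightarrow> 'b) \<Rightarrow> (('a \<Rightarrow> 'k) \<Rightarrow> 'k) \<Rightarrow> (('b \<Rightarrow> 'k) \<Rightarrow> 'k)" where
  "fhat f \<mu> = (\<lambda>g. \<mu> (g \<circ> f))"

text \<open>Compactness of an operator T: F(M) -> F(N): the image of the closed unit ball of F(M) is
  relatively compact in F(N), i.e. every sequence in the unit ball has a subsequence whose image
  converges in F(N).\<close>
definition compact_op ::
  "'a::metric_space \<Rightarrow> 'b::metric_space \<Rightarrow>
   ((('a \<Rightarrow> 'k::real_normed_field) \<Rightarrow> 'k) \<Rightarrow> (('b \<Rightarrow> 'k) \<Rightarrow> 'k)) \<Rightarrow> bool" where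
  "compact_op zM zN T \<longleftrightarrow>
     (\<forall>\<mu>. (\<forall>n. \<mu> n \<in> free zM \<and> dnorm zM (\<mu> n) \<le> 1) \<longrightarrow>
        (\<exists>(r::nat \<Rightarrow> nat) \<nu>. strict_mono r \<and> \<nu> \<in> free zN \<and>
           (\<lambda>n. dnorm zN (\<lambda>g. T (\<mu> (r n)) g - \<nu> g)) \<longlonglongrightarrow> 0))"

end

theory Submission
  imports Defs
begin

text \<open>Suppose the conclusion fails for some \<open>\<epsilon>\<close>. Then there are pairs \<open>x\<^sub>n, y\<^sub>n\<close> with
  \<open>d(x\<^sub>n, y\<^sub>n) \<rightarrow> \<infinity>\<close> and \<open>d(f x\<^sub>n, f y\<^sub>n) > \<epsilon> d(x\<^sub>n, y\<^sub>n)\<close>. The molecules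
  \<open>(\<delta>(x\<^sub>n) - \<delta>(y\<^sub>n)) / d(x\<^sub>n, y\<^sub>n)\<close> lie in the unit ball of \<open>F(M)\<close>, so by compactness their
  images \<open>(\<delta>(f x\<^sub>n) - \<delta>(f y\<^sub>n)) / d(x\<^sub>n, y\<^sub>n)\<close> converge along a subsequence to some \<open>\<nu> \<in> F(N)\<close>.
  Tested against a bounded Lipschitz function these images tend to \<open>0\<close>, so \<open>\<nu>\<close> annihilates all
  bounded functions of \<open>Lip\<^sub>0(N)\<close>; being a limit of finitely supported functionals, \<open>\<nu>\<close> then
  annihilates every \<open>g \<in> Lip\<^sub>0(N)\<close>, because \<open>g\<close> agrees on a finite set with its radial truncation.
  Hence the images tend to \<open>0\<close> in norm, which is absurd: against the \<open>1\<close>-Lipschitz function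
  \<open>d(\<cdot>, f y\<^sub>n)\<close> the \<open>n\<close>-th image takes the value \<open>d(f x\<^sub>n, f y\<^sub>n) / d(x\<^sub>n, y\<^sub>n) > \<epsilon>\<close>.\<close>

definition radial_trunc :: "real \<Rightarrow> 'k::real_normed_vector \<Rightarrow> 'k" where
  "radial_trunc K z = (if norm z \<le> K then z else (K / norm z) *\<^sub>R z)"

lemma norm_radial_trunc_le: "0 \<le> K \<Longrightarrow> norm (radial_trunc K z) \<le> K"
  by (auto simp: radial_trunc_def)

lemma radial_trunc_eq_self: "norm z \<le> K \<Longrightarrow> radial_trunc K z = z"
  by (auto simp: radial_trunc_def)

lemma norm_radial_trunc_diff_le_inside:
  assumes "0 \<le> K" and "K < norm z" and "norm w \<le> K"
  shows "norm (radial_trunc K z - w) \<le> 2 * norm (z - w)"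
proof -
  have "norm z > 0" using assms by linarith
  have "radial_trunc K z - z = (K / norm z - 1) *\<^sub>R z"
    using assms by (simp add: radial_trunc_def algebra_simps)
  hence "norm (radial_trunc K z - z) = \<bar>K / norm z - 1\<bar> * norm z"
    by simp
  also have "\<dots> = norm z - K"
    using assms \<open>norm z > 0\<close> by (simp add: abs_if field_simps)
  also have "\<dots> \<le> norm (z - w)"
    using assms norm_triangle_ineq2[of z w] by linarith
  finally show ?thesis
    using norm_triangle_ineq[of "radial_trunc K z - z" "z - w"] by simp
qed

lemma norm_radial_trunc_diff_le_outside:
  assumes "0 \<le> K" and z: "K < norm z" and w: "K < norm w"
  shows "norm (radial_trunc K z - radial_trunc K w) \<le> 2 * norm (z - w)"
proof -
  have pos: "norm z > 0" "norm w > 0" using assms by linarith+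
  have "radial_trunc K z - radial_trunc K w
      = (K / norm z) *\<^sub>R (z - w) + (K * (1 / norm z - 1 / norm w)) *\<^sub>R w"
    using z w by (simp add: radial_trunc_def algebra_simps)
  hence "norm (radial_trunc K z - radial_trunc K w)
      \<le> norm ((K / norm z) *\<^sub>R (z - w)) + norm ((K * (1 / norm z - 1 / norm w)) *\<^sub>R w)"
    by (metis norm_triangle_ineq)
  also have "\<dots> = K / norm z * norm (z - w) + K * \<bar>1 / norm z - 1 / norm w\<bar> * norm w"
    using \<open>0 \<le> K\<close> by (simp add: abs_mult)
  also have "K / norm z * norm (z - w) \<le> norm (z - w)"
    using assms pos by (simp add: field_simps mult_right_mono)
  also have "K * \<bar>1 / norm z - 1 / norm w\<bar> * norm w = K / norm z * \<bar>norm w - norm z\<bar>"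
  proof -
    have "1 / norm z - 1 / norm w = (norm w - norm z) / (norm z * norm w)"
      using pos by (simp add: field_simps)
    then show ?thesis using pos by simp
  qed
  also have "\<dots> \<le> \<bar>norm w - norm z\<bar>"
    using assms pos by (simp add: field_simps mult_right_mono)
  also have "\<bar>norm w - norm z\<bar> \<le> norm (z - w)"
    by (metis norm_minus_commute norm_triangle_ineq3)
  finally show ?thesis by simp
qed

lemma norm_radial_trunc_diff_le:
  assumes "0 \<le> K"
  shows "norm (radial_trunc K z - radial_trunc K w) \<le> 2 * norm (z - w)"
proof (cases "norm z \<le> K"; cases "norm w \<le> K")
  assume "norm z \<le> K" "norm w \<le> K"
  then show ?thesis by (simp add: radial_trunc_eq_self)
next
  assume "norm z \<le> K" "\<not> norm w \<le> K"
  then show ?thesis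
    using norm_radial_trunc_diff_le_inside[OF assms, of w z]
    by (simp add: radial_trunc_eq_self norm_minus_commute)
next
  assume "\<not> norm z \<le> K" "norm w \<le> K"
  then show ?thesis
    using norm_radial_trunc_diff_le_inside[OF assms, of z w] by (simp add: radial_trunc_eq_self)
next
  assume "\<not> norm z \<le> K" "\<not> norm w \<le> K"
  then show ?thesis using norm_radial_trunc_diff_le_outside[OF assms] by (simp add: not_le)
qed

lemma
  fixes g :: "'a::metric_space \<Rightarrow> 'k::real_normed_field"
  assumes "L-lipschitz_on UNIV g"
  shows lipconst_nonneg: "0 \<le> lipconst g"
    and lipconst_le: "lipconst g \<le> L"
    and lipschitz_on_lipconst: "(lipconst g)-lipschitz_on UNIV g"
proof -
  let ?S = "{L. L-lipschitz_on UNIV g}"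
  have ne: "?S \<noteq> {}" using assms by blast
  show "0 \<le> lipconst g" unfolding lipconst_def
    by (rule cInf_greatest[OF ne]) (auto dest: lipschitz_on_nonneg)
  show "lipconst g \<le> L" unfolding lipconst_def
    by (rule cInf_lower) (use assms in \<open>auto intro: bdd_belowI[of _ 0] dest: lipschitz_on_nonneg\<close>)
  have "dist (g x) (g y) \<le> lipconst g * dist x y" for x y
  proof (cases "x = y")
    case False
    then have "dist (g x) (g y) / dist x y \<le> lipconst g" unfolding lipconst_def
      by (intro cInf_greatest[OF ne]) (auto simp: divide_le_eq dest: lipschitz_onD)
    with False show ?thesis by (simp add: divide_le_eq)
  qed simp
  with \<open>0 \<le> lipconst g\<close> show "(lipconst g)-lipschitz_on UNIV g"
    by (auto intro: lipschitz_onI)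
qed

lemma lip0_lipschitz_on_lipconst: "g \<in> lip0 z0 \<Longrightarrow> (lipconst g)-lipschitz_on UNIV g"
  unfolding lip0_def using lipschitz_on_lipconst by blast

lemma lip0_lipconst_nonneg: "g \<in> lip0 z0 \<Longrightarrow> 0 \<le> lipconst g"
  unfolding lip0_def using lipconst_nonneg by blast

lemma norm_lip0_le: "g \<in> lip0 z0 \<Longrightarrow> norm (g x) \<le> lipconst g * dist x z0"
  using lipschitz_onD[OF lip0_lipschitz_on_lipconst, of g z0 x z0] by (simp add: lip0_def dist_norm)

lemma lipconst_zero: "lipconst (\<lambda>_::'a::metric_space. 0::'k::real_normed_field) = 0"
proof -
  have "0-lipschitz_on UNIV (\<lambda>_::'a. 0::'k)" by (auto intro: lipschitz_onI)
  from lipconst_nonneg[OF this] lipconst_le[OF this] show ?thesis by linarith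
qed

lemma zero_in_lip0: "(\<lambda>_. 0) \<in> lip0 z0"
  unfolding lip0_def by (auto intro!: exI[of _ 0] lipschitz_onI)

lemma radial_trunc_comp_lip0:
  assumes g: "g \<in> lip0 z0" and "0 \<le> K"
  shows "(\<lambda>x. radial_trunc K (g x)) \<in> lip0 z0"
    and "lipconst (\<lambda>x. radial_trunc K (g x)) \<le> 2 * lipconst g"
proof -
  have "(2 * lipconst g)-lipschitz_on UNIV (\<lambda>x. radial_trunc K (g x))"
  proof (rule lipschitz_onI)
    fix x y
    have "dist (radial_trunc K (g x)) (radial_trunc K (g y)) \<le> 2 * dist (g x) (g y)"
      unfolding dist_norm by (rule norm_radial_trunc_diff_le[OF \<open>0 \<le> K\<close>])
    also have "\<dots> \<le> 2 * (lipconst g * dist x y)"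
      using lipschitz_onD[OF lip0_lipschitz_on_lipconst[OF g]] by simp
    finally show "dist (radial_trunc K (g x)) (radial_trunc K (g y)) \<le> 2 * lipconst g * dist x y"
      by simp
  qed (use lip0_lipconst_nonneg[OF g] in simp)
  then show "(\<lambda>x. radial_trunc K (g x)) \<in> lip0 z0"
    and "lipconst (\<lambda>x. radial_trunc K (g x)) \<le> 2 * lipconst g"
    using g \<open>0 \<le> K\<close> by (auto simp: lip0_def radial_trunc_def intro: lipconst_le)
qed

lemma dist_diff_in_lip0:
  fixes q z0 :: "'a::metric_space"
  shows "(\<lambda>z. of_real (dist z q - dist z0 q) :: 'k::real_normed_field) \<in> lip0 z0"
    and "lipconst (\<lambda>z. of_real (dist z q - dist z0 q) :: 'k) \<le> 1"
proof -
  have "1-lipschitz_on UNIV (\<lambda>z. of_real (dist z q - dist z0 q) :: 'k)"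
  proof (rule lipschitz_onI)
    fix x y
    have "\<bar>dist x q - dist y q\<bar> \<le> dist x y"
      using abs_dist_diff_le[of x q y] by (simp add: dist_commute)
    then show "dist (of_real (dist x q - dist z0 q) :: 'k) (of_real (dist y q - dist z0 q)) \<le> 1 * dist x y"
      by (simp add: dist_norm flip: of_real_diff)
  qed simp
  then show "(\<lambda>z. of_real (dist z q - dist z0 q) :: 'k) \<in> lip0 z0"
    and "lipconst (\<lambda>z. of_real (dist z q - dist z0 q) :: 'k) \<le> 1"
    by (auto simp: lip0_def intro: lipconst_le)
qed

text \<open>Homogeneity and boundedness on \<open>Lip\<^sub>0\<close> are all that is needed to compare the values of
  a functional with its dual norm \<open>dnorm\<close>.\<close>

definition bounded_homogeneous ::
  "'a::metric_space \<Rightarrow> (('a \<Rightarrow> 'k::real_normed_field) \<Rightarrow> 'k) \<Rightarrow> bool" where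
  "bounded_homogeneous z0 \<rho> \<longleftrightarrow>
     (\<forall>g\<in>lip0 z0. \<forall>c. \<rho> (\<lambda>x. c * g x) = c * \<rho> g) \<and>
     (\<exists>B. \<forall>g\<in>lip0 z0. norm (\<rho> g) \<le> B * lipconst g)"

lemma bounded_homogeneousI:
  assumes "\<And>g c. g \<in> lip0 z0 \<Longrightarrow> \<rho> (\<lambda>x. c * g x) = c * \<rho> g"
    and "\<And>g. g \<in> lip0 z0 \<Longrightarrow> norm (\<rho> g) \<le> B * lipconst g"
  shows "bounded_homogeneous z0 \<rho>"
  using assms unfolding bounded_homogeneous_def by blast

lemma free_imp_bounded_homogeneous: "\<nu> \<in> free z0 \<Longrightarrow> bounded_homogeneous z0 \<nu>"
  unfolding free_def bounded_homogeneous_def by blast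

lemma bounded_homogeneous_diff:
  assumes "bounded_homogeneous z0 \<rho>" and "bounded_homogeneous z0 \<sigma>"
  shows "bounded_homogeneous z0 (\<lambda>g. \<rho> g - \<sigma> g)"
proof -
  obtain A B where A: "\<And>g. g \<in> lip0 z0 \<Longrightarrow> norm (\<rho> g) \<le> A * lipconst g"
    and B: "\<And>g. g \<in> lip0 z0 \<Longrightarrow> norm (\<sigma> g) \<le> B * lipconst g"
    using assms unfolding bounded_homogeneous_def by blast
  show ?thesis
  proof (rule bounded_homogeneousI)
    show "\<rho> (\<lambda>x. c * g x) - \<sigma> (\<lambda>x. c * g x) = c * (\<rho> g - \<sigma> g)" if "g \<in> lip0 z0" for g c
      using assms that by (simp add: bounded_homogeneous_def right_diff_distrib)
    show "norm (\<rho> g - \<sigma> g) \<le> (A + B) * lipconst g" if "g \<in> lip0 z0" for g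
      using norm_triangle_ineq4[of "\<rho> g" "\<sigma> g"] A[OF that] B[OF that]
      by (simp add: distrib_right)
  qed
qed

lemma bounded_homogeneous_delta_sum:
  "bounded_homogeneous z0 (\<lambda>g. \<Sum>x\<in>S. c x * delta x g)"
proof (rule bounded_homogeneousI)
  show "(\<Sum>x\<in>S. c x * delta x (\<lambda>y. c' * g y)) = c' * (\<Sum>x\<in>S. c x * delta x g)" for g c'
    by (simp add: delta_def sum_distrib_left mult.left_commute)
  show "norm (\<Sum>x\<in>S. c x * delta x g) \<le> (\<Sum>x\<in>S. norm (c x) * dist x z0) * lipconst g"
    if g: "g \<in> lip0 z0" for g
  proof -
    have "norm (\<Sum>x\<in>S. c x * delta x g) \<le> (\<Sum>x\<in>S. norm (c x) * norm (g x))"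
      using norm_sum[of "\<lambda>x. c x * g x" S] by (simp add: delta_def norm_mult)
    also have "\<dots> \<le> (\<Sum>x\<in>S. norm (c x) * (lipconst g * dist x z0))"
      by (intro sum_mono mult_left_mono norm_lip0_le[OF g]) simp
    finally show ?thesis by (simp add: sum_distrib_left sum_distrib_right mult_ac)
  qed
qed

lemma norm_le_dnorm:
  fixes \<rho> :: "('a::metric_space \<Rightarrow> 'k::real_normed_field) \<Rightarrow> 'k"
  assumes "bounded_homogeneous z0 \<rho>" and "g \<in> lip0 z0" and "lipconst g \<le> 1"
  shows "norm (\<rho> g) \<le> dnorm z0 \<rho>"
proof -
  obtain B where B: "\<And>g. g \<in> lip0 z0 \<Longrightarrow> norm (\<rho> g) \<le> B * lipconst g"
    using assms unfolding bounded_homogeneous_def by blast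
  have "norm (\<rho> h) \<le> \<bar>B\<bar>" if "h \<in> lip0 z0" "lipconst h \<le> 1" for h
  proof -
    have "B * lipconst h \<le> \<bar>B\<bar> * lipconst h"
      using lip0_lipconst_nonneg[OF that(1)] by (intro mult_right_mono) simp_all
    also have "\<dots> \<le> \<bar>B\<bar>"
      using lip0_lipconst_nonneg[OF that(1)] that(2) by (intro mult_left_le) simp_all
    finally show ?thesis using B[OF that(1)] by simp
  qed
  then have "bdd_above {norm (\<rho> h) | h. h \<in> lip0 z0 \<and> lipconst h \<le> 1}"
    by (auto intro!: bdd_aboveI[of _ "\<bar>B\<bar>"])
  moreover have "norm (\<rho> g) \<in> {norm (\<rho> h) | h. h \<in> lip0 z0 \<and> lipconst h \<le> 1}"
    using assms(2,3) by blast
  ultimately show ?thesis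
    unfolding dnorm_def by (rule cSup_upper[rotated])
qed

lemma dnorm_nonneg:
  fixes \<rho> :: "('a::metric_space \<Rightarrow> 'k::real_normed_field) \<Rightarrow> 'k"
  assumes "bounded_homogeneous z0 \<rho>"
  shows "0 \<le> dnorm z0 \<rho>"
proof -
  have "\<forall>g\<in>lip0 z0. \<forall>c. \<rho> (\<lambda>x. c * g x) = c * \<rho> g"
    using assms unfolding bounded_homogeneous_def by blast
  from this[rule_format, OF zero_in_lip0, of 0] have "\<rho> (\<lambda>_. 0) = 0" by simp
  then show ?thesis
    using norm_le_dnorm[OF assms zero_in_lip0] by (simp add: lipconst_zero)
qed

lemma norm_le_dnorm_mult_lipconst:
  fixes \<rho> :: "('a::metric_space \<Rightarrow> 'k::real_normed_field) \<Rightarrow> 'k"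
  assumes \<rho>: "bounded_homogeneous z0 \<rho>" and g: "g \<in> lip0 z0"
  shows "norm (\<rho> g) \<le> dnorm z0 \<rho> * lipconst g"
proof -
  have hom: "\<And>c. \<rho> (\<lambda>x. c * g x) = c * \<rho> g"
    using \<rho> g unfolding bounded_homogeneous_def by blast
  define L where "L = lipconst g"
  show ?thesis
  proof (cases "L = 0")
    case True
    then have "g = (\<lambda>x. 0 * g x)"
      using norm_lip0_le[OF g] by (auto simp: fun_eq_iff L_def)
    then show ?thesis using hom[of 0] True L_def by simp
  next
    case False
    with lip0_lipconst_nonneg[OF g] have "L > 0" by (simp add: L_def)
    have "(\<bar>1 / L\<bar> * L)-lipschitz_on UNIV (\<lambda>x. (1 / L) *\<^sub>R g x)"
      using lipschitz_on_cmult[OF lip0_lipschitz_on_lipconst[OF g], of "1 / L"] by (simp add: L_def)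
    then have "1-lipschitz_on UNIV (\<lambda>x. (1 / L) *\<^sub>R g x)"
      using \<open>L > 0\<close> by simp
    then have "(\<lambda>x. of_real (1 / L) * g x) \<in> lip0 z0"
      and "lipconst (\<lambda>x. of_real (1 / L) * g x) \<le> 1"
      using g by (auto simp: lip0_def scaleR_conv_of_real intro: lipconst_le)
    from norm_le_dnorm[OF \<rho> this] have "norm (\<rho> g) / L \<le> dnorm z0 \<rho>"
      unfolding hom using \<open>L > 0\<close> by (simp add: norm_mult norm_divide)
    then show ?thesis using \<open>L > 0\<close> by (simp add: L_def divide_le_eq mult.commute)
  qed
qed

lemma dnorm_le:
  fixes \<rho> :: "('a::metric_space \<Rightarrow> 'k::real_normed_field) \<Rightarrow> 'k"
  assumes "\<And>g. g \<in> lip0 z0 \<Longrightarrow> lipconst g \<le> 1 \<Longrightarrow> norm (\<rho> g) \<le> b"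
  shows "dnorm z0 \<rho> \<le> b"
proof -
  have "(\<lambda>_. 0) \<in> lip0 z0 \<and> lipconst (\<lambda>_::'a. 0::'k) \<le> 1"
    by (simp add: zero_in_lip0 lipconst_zero)
  then show ?thesis
    unfolding dnorm_def by (intro cSup_least) (use assms in blast)+
qed

text \<open>The molecules of \<open>F(M)\<close> are \<open>dipole (dist p q) p q\<close>. The weight \<open>D\<close> is a separate
  parameter because \<open>fhat f\<close> moves the two points but keeps the weight.\<close>

definition dipole :: "real \<Rightarrow> 'a \<Rightarrow> 'a \<Rightarrow> ('a \<Rightarrow> 'k::real_normed_field) \<Rightarrow> 'k" where
  "dipole D p q = (\<lambda>g. (g p - g q) / of_real D)"

lemma fhat_dipole: "fhat f (dipole D p q) = dipole D (f p) (f q)"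
  by (simp add: fhat_def dipole_def)

lemma norm_dipole_le:
  assumes "g \<in> lip0 z0"
  shows "norm (dipole D p q g) \<le> lipconst g * dist p q / \<bar>D\<bar>"
proof -
  have "norm (g p - g q) \<le> lipconst g * dist p q"
    using lipschitz_onD[OF lip0_lipschitz_on_lipconst[OF assms]] by (simp add: dist_norm)
  then show ?thesis by (simp add: dipole_def norm_divide divide_right_mono)
qed

lemma norm_dipole_le_bound:
  assumes "\<And>x. norm (g x) \<le> K"
  shows "norm (dipole D p q g) \<le> 2 * K / \<bar>D\<bar>"
proof -
  have "norm (g p - g q) \<le> 2 * K"
    using norm_triangle_ineq4[of "g p" "g q"] assms[of p] assms[of q] by linarith
  then show ?thesis by (simp add: dipole_def norm_divide divide_right_mono)
qed

lemma bounded_homogeneous_dipole: "bounded_homogeneous z0 (dipole D p q)"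
proof (rule bounded_homogeneousI)
  show "dipole D p q (\<lambda>x. c * g x) = c * dipole D p q g" for g c
    by (simp add: dipole_def right_diff_distrib)
  show "norm (dipole D p q g) \<le> dist p q / \<bar>D\<bar> * lipconst g" if "g \<in> lip0 z0" for g
    using norm_dipole_le[OF that] by (simp add: mult.commute)
qed

lemma dipole_in_free: "(dipole D p q :: ('a::metric_space \<Rightarrow> 'k::real_normed_field) \<Rightarrow> 'k) \<in> free z0"
proof -
  define c :: "'a \<Rightarrow> 'k" where
    "c x = ((if x = p then 1 else 0) - (if x = q then 1 else 0)) / of_real D" for x
  have "(\<Sum>x\<in>{p, q}. c x * delta x g) = dipole D p q g" for g
    by (cases "p = q") (simp_all add: c_def delta_def dipole_def diff_divide_distrib)
  then have "\<forall>e>0. \<exists>S c. finite S \<and>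
      dnorm z0 (\<lambda>g :: 'a \<Rightarrow> 'k. dipole D p q g - (\<Sum>x\<in>S. c x * delta x g)) \<le> e"
    by (intro allI impI exI[of _ "{p, q}"] exI[of _ c]) (simp add: dnorm_le)
  moreover have "\<exists>B. \<forall>g\<in>lip0 z0. norm (dipole D p q g :: 'k) \<le> B * lipconst g"
    using bounded_homogeneous_dipole unfolding bounded_homogeneous_def by blast
  moreover have "dipole D p q (\<lambda>x. g x + h x) = dipole D p q g + dipole D p q h"
    and "dipole D p q (\<lambda>x. c' * g x) = c' * dipole D p q g" for g h :: "'a \<Rightarrow> 'k" and c'
    by (simp_all add: dipole_def add_diff_add add_divide_distrib right_diff_distrib)
  ultimately show ?thesis
    unfolding free_def by simp
qed

lemma dnorm_dipole_le: "dnorm z0 (dipole D p q) \<le> dist p q / \<bar>D\<bar>"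
proof (rule dnorm_le)
  fix g assume "g \<in> lip0 z0" "lipconst g \<le> 1"
  then have "lipconst g * dist p q / \<bar>D\<bar> \<le> dist p q / \<bar>D\<bar>"
    using mult_left_le_one_le[OF _ lip0_lipconst_nonneg, of "dist p q / \<bar>D\<bar>" g z0] by simp
  with norm_dipole_le[OF \<open>g \<in> lip0 z0\<close>] show "norm (dipole D p q g) \<le> dist p q / \<bar>D\<bar>"
    by (rule order_trans)
qed

lemma norm_free_le_if_vanishes_on_bounded:
  fixes \<nu> :: "('a::metric_space \<Rightarrow> 'k::real_normed_field) \<Rightarrow> 'k"
  assumes \<nu>: "\<nu> \<in> free z0"
    and vanishes: "\<And>h. h \<in> lip0 z0 \<Longrightarrow> bounded (range h) \<Longrightarrow> \<nu> h = 0"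
    and g: "g \<in> lip0 z0" and "e > 0"
  shows "norm (\<nu> g) \<le> 3 * e * lipconst g"
proof -
  have "\<exists>S c. finite S \<and> dnorm z0 (\<lambda>h. \<nu> h - (\<Sum>x\<in>S. c x * delta x h)) \<le> e"
    using \<nu> \<open>e > 0\<close> by (simp add: free_def)
  then obtain S c where "finite S" and dn: "dnorm z0 (\<lambda>h. \<nu> h - (\<Sum>x\<in>S. c x * delta x h)) \<le> e"
    by blast
  define \<rho> where "\<rho> = (\<lambda>h. \<nu> h - (\<Sum>x\<in>S. c x * delta x h))"
  have \<rho>: "bounded_homogeneous z0 \<rho>"
    unfolding \<rho>_def
    by (intro bounded_homogeneous_diff free_imp_bounded_homogeneous \<nu> bounded_homogeneous_delta_sum)
  from dn have "dnorm z0 \<rho> \<le> e" unfolding \<rho>_def .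
  define K where "K = (\<Sum>x\<in>S. norm (g x))"
  have "0 \<le> K" by (simp add: K_def sum_nonneg)
  define gK where "gK x = radial_trunc K (g x)" for x
  have gK: "gK \<in> lip0 z0" "lipconst gK \<le> 2 * lipconst g"
    unfolding gK_def using radial_trunc_comp_lip0[OF g \<open>0 \<le> K\<close>] by auto
  have "\<nu> gK = 0"
    using gK(1) norm_radial_trunc_le[OF \<open>0 \<le> K\<close>]
    by (intro vanishes) (auto simp: gK_def bounded_iff)
  moreover have "(\<Sum>x\<in>S. c x * delta x gK) = (\<Sum>x\<in>S. c x * delta x g)"
  proof (rule sum.cong[OF refl])
    fix x assume "x \<in> S"
    then have "norm (g x) \<le> K"
      unfolding K_def using \<open>finite S\<close> by (intro member_le_sum) auto
    then show "c x * delta x gK = c x * delta x g"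
      by (simp add: delta_def gK_def radial_trunc_eq_self)
  qed
  ultimately have "\<nu> g = \<rho> g - \<rho> gK" by (simp add: \<rho>_def)
  then have "norm (\<nu> g) \<le> norm (\<rho> g) + norm (\<rho> gK)"
    by (simp add: norm_triangle_ineq4)
  also have "norm (\<rho> g) \<le> dnorm z0 \<rho> * lipconst g"
    by (rule norm_le_dnorm_mult_lipconst[OF \<rho> g])
  also have "\<dots> \<le> e * lipconst g"
    by (rule mult_right_mono[OF \<open>dnorm z0 \<rho> \<le> e\<close> lip0_lipconst_nonneg[OF g]])
  also have "norm (\<rho> gK) \<le> dnorm z0 \<rho> * lipconst gK"
    by (rule norm_le_dnorm_mult_lipconst[OF \<rho> gK(1)])
  also have "\<dots> \<le> e * (2 * lipconst g)"
    using \<open>e > 0\<close> by (intro mult_mono \<open>dnorm z0 \<rho> \<le> e\<close> gK(2) lip0_lipconst_nonneg[OF gK(1)]) simp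
  finally show ?thesis by simp
qed

lemma free_vanishes_if_vanishes_on_bounded:
  fixes \<nu> :: "('a::metric_space \<Rightarrow> 'k::real_normed_field) \<Rightarrow> 'k"
  assumes \<nu>: "\<nu> \<in> free z0"
    and vanishes: "\<And>h. h \<in> lip0 z0 \<Longrightarrow> bounded (range h) \<Longrightarrow> \<nu> h = 0"
    and g: "g \<in> lip0 z0"
  shows "\<nu> g = 0"
proof -
  have "norm (\<nu> g) \<le> 0 + e" if "e > 0" for e
  proof -
    let ?L = "lipconst g"
    have "0 \<le> ?L" by (rule lip0_lipconst_nonneg[OF g])
    then have "norm (\<nu> g) \<le> 3 * (e / (3 * ?L + 1)) * ?L"
      using norm_free_le_if_vanishes_on_bounded[OF \<nu> vanishes g, where e = "e / (3 * ?L + 1)"] \<open>e > 0\<close>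
      by simp
    also have "\<dots> \<le> e"
      using \<open>e > 0\<close> \<open>0 \<le> ?L\<close> by (simp add: field_simps)
    finally show ?thesis by simp
  qed
  then have "norm (\<nu> g) \<le> 0" by (rule field_le_epsilon)
  then show ?thesis by simp
qed

lemma free_limit_of_dipoles_vanishes_on_bounded:
  fixes \<nu> :: "('a::metric_space \<Rightarrow> 'k::real_normed_field) \<Rightarrow> 'k"
  assumes D: "filterlim D at_top sequentially" and \<nu>: "\<nu> \<in> free z0"
    and lim: "(\<lambda>n. dnorm z0 (\<lambda>h. dipole (D n) (p n) (q n) h - \<nu> h)) \<longlonglongrightarrow> 0"
    and g: "g \<in> lip0 z0" and "bounded (range g)"
  shows "\<nu> g = 0"
proof -
  obtain K where K: "\<And>x. norm (g x) \<le> K"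
    using \<open>bounded (range g)\<close> by (auto simp: bounded_iff)
  let ?\<rho> = "\<lambda>n h. dipole (D n) (p n) (q n) h - \<nu> h"
  have "norm (\<nu> g) \<le> 2 * K * \<bar>inverse (D n)\<bar> + dnorm z0 (?\<rho> n) * lipconst g" for n
  proof -
    have "norm (\<nu> g) \<le> norm (dipole (D n) (p n) (q n) g) + norm (?\<rho> n g)"
      using norm_triangle_ineq4[of "dipole (D n) (p n) (q n) g" "?\<rho> n g"] by simp
    also have "norm (dipole (D n) (p n) (q n) g) \<le> 2 * K * \<bar>inverse (D n)\<bar>"
      using norm_dipole_le_bound[OF K] by (simp add: divide_inverse abs_inverse)
    also have "norm (?\<rho> n g) \<le> dnorm z0 (?\<rho> n) * lipconst g"
      by (intro norm_le_dnorm_mult_lipconst bounded_homogeneous_diff bounded_homogeneous_dipole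
          free_imp_bounded_homogeneous \<nu> g)
    finally show ?thesis by simp
  qed
  moreover have "(\<lambda>n. 2 * K * \<bar>inverse (D n)\<bar> + dnorm z0 (?\<rho> n) * lipconst g) \<longlonglongrightarrow> 0"
    using tendsto_mult_right_zero[OF tendsto_rabs_zero[OF tendsto_inverse_0_at_top[OF D]], of "2 * K"]
      tendsto_mult_left_zero[OF lim, of "lipconst g"]
    by (rule tendsto_add_zero)
  ultimately have "norm (\<nu> g) \<le> 0"
    by (intro LIMSEQ_le_const) auto
  then show ?thesis by simp
qed

lemma dipole_ratio_tendsto_0:
  fixes \<nu> :: "('a::metric_space \<Rightarrow> 'k::real_normed_field) \<Rightarrow> 'k"
  assumes D: "filterlim D at_top sequentially" and \<nu>: "\<nu> \<in> free z0"
    and lim: "(\<lambda>n. dnorm z0 (\<lambda>h. dipole (D n) (p n) (q n) h - \<nu> h)) \<longlonglongrightarrow> 0"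
  shows "(\<lambda>n. dist (p n) (q n) / \<bar>D n\<bar>) \<longlonglongrightarrow> 0"
proof -
  have \<nu>0: "\<nu> g = 0" if "g \<in> lip0 z0" for g
    using free_vanishes_if_vanishes_on_bounded[OF \<nu> free_limit_of_dipoles_vanishes_on_bounded[OF D \<nu> lim]
        that] .
  have "dist (p n) (q n) / \<bar>D n\<bar> \<le> dnorm z0 (\<lambda>h. dipole (D n) (p n) (q n) h - \<nu> h)" for n
  proof -
    let ?h = "\<lambda>z. of_real (dist z (q n) - dist z0 (q n)) :: 'k"
    have "dist (p n) (q n) / \<bar>D n\<bar> = norm (dipole (D n) (p n) (q n) ?h - \<nu> ?h)"
      using \<nu>0[OF dist_diff_in_lip0(1)] by (simp add: dipole_def norm_divide)
    also have "\<dots> \<le> dnorm z0 (\<lambda>h. dipole (D n) (p n) (q n) h - \<nu> h)"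
      by (intro norm_le_dnorm bounded_homogeneous_diff bounded_homogeneous_dipole
          free_imp_bounded_homogeneous \<nu> dist_diff_in_lip0)
    finally show ?thesis .
  qed
  then show ?thesis
    by (intro Lim_null_comparison[OF _ lim] always_eventually) simp
qed

lemma compact_op_fhat_imp_dist_ratio_vanishes:
  fixes f :: "'a::metric_space \<Rightarrow> 'b::metric_space"
  assumes "compact_op zM zN (fhat f :: (('a \<Rightarrow> 'k::real_normed_field) \<Rightarrow> 'k) \<Rightarrow> _)"
  shows "\<forall>\<epsilon>>0. \<exists>R>0. \<forall>x y. dist x y \<ge> R \<longrightarrow> dist (f x) (f y) \<le> \<epsilon> * dist x y"
proof (rule ccontr)
  assume "\<not> ?thesis"
  then obtain \<epsilon> where "\<epsilon> > 0"
    and far: "\<And>R. R > 0 \<Longrightarrow> \<exists>x y. R \<le> dist x y \<and> \<epsilon> * dist x y < dist (f x) (f y)"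
    by (auto simp: not_le)
  have "\<forall>n. \<exists>x y. real n + 1 \<le> dist x y \<and> \<epsilon> * dist x y < dist (f x) (f y)"
    using far by simp
  then obtain x y :: "nat \<Rightarrow> 'a" where xy_far: "\<And>n. real n + 1 \<le> dist (x n) (y n)"
    and xy_expand: "\<And>n. \<epsilon> * dist (x n) (y n) < dist (f (x n)) (f (y n))"
    by metis
  define D where "D n = dist (x n) (y n)" for n
  have "D n > 0" for n
    using xy_far[of n] unfolding D_def by (rule order_less_le_trans[rotated]) simp
  define \<mu> :: "nat \<Rightarrow> ('a \<Rightarrow> 'k) \<Rightarrow> 'k" where "\<mu> n = dipole (D n) (x n) (y n)" for n
  have "\<mu> n \<in> free zM \<and> dnorm zM (\<mu> n) \<le> 1" for n
    using dnorm_dipole_le[of zM "D n" "x n" "y n"] \<open>D n > 0\<close>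
    by (simp add: \<mu>_def D_def dipole_in_free)
  with assms obtain r \<nu> where r: "strict_mono r" and \<nu>: "\<nu> \<in> free zN"
    and lim: "(\<lambda>n. dnorm zN (\<lambda>g. fhat f (\<mu> (r n)) g - \<nu> g)) \<longlonglongrightarrow> 0"
    unfolding compact_op_def by (elim allE impE exE conjE) auto
  have "filterlim (\<lambda>n. D (r n)) at_top sequentially"
    using filterlim_real_sequentially
  proof (rule filterlim_at_top_mono)
    have "real n \<le> D (r n)" for n
      using seq_suble[OF r, of n] xy_far[of "r n"] unfolding D_def by linarith
    then show "\<forall>\<^sub>F n in sequentially. real n \<le> D (r n)"
      by (intro always_eventually allI)
  qed
  with \<nu> lim have "(\<lambda>n. dist (f (x (r n))) (f (y (r n))) / \<bar>D (r n)\<bar>) \<longlonglongrightarrow> 0"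
    by (intro dipole_ratio_tendsto_0) (simp_all add: \<mu>_def fhat_dipole)
  from order_tendstoD(2)[OF this \<open>\<epsilon> > 0\<close>] obtain N
    where "\<And>n. n \<ge> N \<Longrightarrow> dist (f (x (r n))) (f (y (r n))) / \<bar>D (r n)\<bar> < \<epsilon>"
    by (auto simp: eventually_sequentially)
  moreover have "\<epsilon> < dist (f (x (r N))) (f (y (r N))) / \<bar>D (r N)\<bar>"
    using xy_expand[of "r N"] \<open>D (r N) > 0\<close> by (simp add: D_def less_divide_eq mult.commute)
  ultimately show False by fastforce
qed

text \<open>Completeness, the Lipschitz condition and \<open>f zM = zN\<close> only serve to make \<open>fhat f\<close> a
  well-defined operator in the paper; here \<open>fhat f\<close> is defined by composition for any \<open>f\<close>, and
  the argument needs none of them.\<close>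

theorem mainTheorem9:
  fixes f :: "'a::metric_space \<Rightarrow> 'b::metric_space" and zM :: 'a and zN :: 'b
  assumes "complete (UNIV :: 'a set)" and "complete (UNIV :: 'b set)"
    and "\<exists>C. C-lipschitz_on UNIV f" and "f zM = zN"
    and "compact_op zM zN (fhat f :: (('a \<Rightarrow> real) \<Rightarrow> real) \<Rightarrow> _)
       \<or> compact_op zM zN (fhat f :: (('a \<Rightarrow> complex) \<Rightarrow> complex) \<Rightarrow> _)"
  shows "\<forall>\<epsilon>>0. \<exists>R>0. \<forall>x y. dist x y \<ge> R \<longrightarrow> dist (f x) (f y) \<le> \<epsilon> * dist x y"
  using assms(5)
proof
  assume "compact_op zM zN (fhat f :: (('a \<Rightarrow> real) \<Rightarrow> real) \<Rightarrow> _)"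
  then show ?thesis by (rule compact_op_fhat_imp_dist_ratio_vanishes)
next
  assume "compact_op zM zN (fhat f :: (('a \<Rightarrow> complex) \<Rightarrow> complex) \<Rightarrow> _)"
  then show ?thesis by (rule compact_op_fhat_imp_dist_ratio_vanishes)
qed

end
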